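(* Let $k\ge 0$ and $m=2k+1$, and let $ER_m(\hat K)=P_m(\hat K)+\mathrm{span}\{\hat x^{m}\hat y-\hat x\hat y^{m},\ \hat x^{m+1}-\hat y^{m+1}\}$. If $\hat v\in ER_m(\hat K)$ vanishes at all points of $G\cup I$, then $\hat v\equiv 0$.
   Context: $\hat K=[-1,1]^2$; $P_m(\hat K)$ is the space of polynomials of total degree $\le m$. Let $g_{-k},\dots,g_k$ be the zeros of the Legendre polynomial of degree $2k+1$ on $[-1,1]$. $G=\{(1,g_i),(-1,g_i),(g_i,1),(g_i,-1): i=-k,\dots,k\}$. $I$ is a set of $(2k-1)(k-1)$ interior points of $\hat K$ unisolvent for $P_{2k-3}(\hat K)$ (every polynomial in $P_{2k-3}(\hat K)$ is uniquely determined by its values on $I$); $I=\emptyset$ when $k\le1$. *)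

theory Defs
  imports Complex_Main
begin

fun legendre :: "nat \<Rightarrow> real \<Rightarrow> real" where
  "legendre 0 x = 1"
| "legendre (Suc 0) x = x"
| "legendre (Suc (Suc n)) x =
     ((2 * real n + 3) * x * legendre (Suc n) x - (real n + 1) * legendre n x) / (real n + 2)"

definition polyP :: "nat \<Rightarrow> (real \<times> real \<Rightarrow> real) \<Rightarrow> bool" where
  "polyP m f \<longleftrightarrow> (\<exists>c :: nat \<Rightarrow> nat \<Rightarrow> real.
      \<forall>x y. f (x, y) = (\<Sum>i\<le>m. \<Sum>j\<le>m - i. c i j * x ^ i * y ^ j))"

definition ER :: "nat \<Rightarrow> (real \<times> real \<Rightarrow> real) \<Rightarrow> bool" where
  "ER m v \<longleftrightarrow> (\<exists>p a b. polyP m p \<and>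
      (\<forall>x y. v (x, y) = p (x, y) + a * (x ^ m * y - x * y ^ m)
                                   + b * (x ^ (m + 1) - y ^ (m + 1))))"

definition Gset :: "nat \<Rightarrow> (real \<times> real) set" where
  "Gset k = (\<Union>g \<in> {g. -1 \<le> g \<and> g \<le> 1 \<and> legendre (2 * k + 1) g = 0}.
               {(1, g), (-1, g), (g, 1), (g, -1)})"

end

theory Submission
  imports Defs "HOL-Computational_Algebra.Polynomial"
begin

text \<open>
  On an edge \<open>x = s\<close> (\<open>s = \<plusminus>1\<close>) the function \<open>v\<close> restricts to a polynomial of degree at most
  \<open>m + 1\<close> in \<open>y\<close> vanishing at the \<open>m\<close> zeros of the Legendre polynomial \<open>P\<^sub>m\<close>, hence it equals
  \<open>P\<^sub>m(y) (r\<^sub>0 + r\<^sub>1 y)\<close>; since \<open>P\<^sub>m\<close> has parity \<open>m\<close>, \<open>r\<^sub>1\<close> and \<open>r\<^sub>0\<close> are read off the coefficients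
  of \<open>y\<^sup>m\<^sup>+\<^sup>1\<close> and \<open>y\<^sup>m\<close>, namely \<open>-b\<close> and \<open>c\<^sub>0\<^sub>m - a s\<close> (with \<open>c\<^sub>i\<^sub>j\<close> the coefficients of the
  \<open>P\<^sub>m\<close>-part of \<open>v\<close>). With \<open>P\<^sub>m(\<plusminus>1) = \<plusminus>1\<close> this computes \<open>v\<close>
  at the corners; comparing with the same corners seen from the edges \<open>y = \<plusminus>1\<close> forces
  \<open>a = b = c\<^sub>0\<^sub>m = c\<^sub>m\<^sub>0 = 0\<close>, so \<open>v\<close> vanishes on the boundary of the square. Then
  \<open>v = (1 - x\<^sup>2)(1 - y\<^sup>2) q\<close> with \<open>q \<in> P\<^sub>2\<^sub>k\<^sub>-\<^sub>3\<close>, and \<open>q\<close> vanishes on the unisolvent set \<open>I\<close>.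
  That \<open>P\<^sub>m\<close> has \<open>m\<close> distinct zeros in \<open>(-1, 1)\<close> is the classical interlacing argument based on
  the three-term recurrence.
\<close>

section \<open>Legendre polynomials\<close>

fun legendre_poly :: "nat \<Rightarrow> real poly" where
  "legendre_poly 0 = 1"
| "legendre_poly (Suc 0) = [:0, 1:]"
| "legendre_poly (Suc (Suc n)) = smult (1 / (real n + 2))
     (smult (2 * real n + 3) (pCons 0 (legendre_poly (Suc n))) - smult (real n + 1) (legendre_poly n))"

lemma poly_legendre_poly [simp]: "poly (legendre_poly n) x = legendre n x"
  by (induction n rule: legendre_poly.induct) (simp_all add: field_simps)

lemma coeff_legendre_poly_above: "n < j \<Longrightarrow> coeff (legendre_poly n) j = 0"
proof (induction n arbitrary: j rule: legendre_poly.induct)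
  case (3 n)
  then show ?case by (cases j) auto
qed (auto simp: coeff_pCons split: nat.split)

lemma coeff_legendre_poly_parity: "odd (n + j) \<Longrightarrow> coeff (legendre_poly n) j = 0"
proof (induction n arbitrary: j rule: legendre_poly.induct)
  case 2
  then show ?case by (cases j) (auto simp: coeff_pCons odd_pos split: nat.split)
next
  case (3 n)
  then show ?case by (cases j) auto
qed (auto simp: odd_pos)

lemma coeff_legendre_poly_pos: "coeff (legendre_poly n) n > 0"
proof (induction n rule: legendre_poly.induct)
  case (3 n)
  have "coeff (legendre_poly n) (Suc (Suc n)) = 0" by (rule coeff_legendre_poly_above) simp
  with 3 show ?case by (simp add: field_simps, smt (verit) mult_nonneg_nonneg of_nat_0_le_iff)
qed auto

lemma degree_legendre_poly [simp]: "degree (legendre_poly n) = n"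
proof (rule antisym)
  show "degree (legendre_poly n) \<le> n"
    by (rule degree_le) (auto intro: coeff_legendre_poly_above)
  show "n \<le> degree (legendre_poly n)"
    by (rule le_degree) (use coeff_legendre_poly_pos[of n] in auto)
qed

lemma lead_coeff_legendre_poly_pos: "lead_coeff (legendre_poly n) > 0"
  using coeff_legendre_poly_pos[of n] by simp

lemma legendre_at_one [simp]: "legendre n 1 = 1"
  by (induction n rule: legendre_poly.induct) (simp_all add: field_simps)

lemma legendre_at_minus_one [simp]: "legendre n (-1) = (-1) ^ n"
  by (induction n rule: legendre_poly.induct) (simp_all add: field_simps)

lemma sgn_legendre_Suc_at_root:
  assumes "1 \<le> n" "legendre n z = 0"
  shows "sgn (legendre (Suc n) z) = - sgn (legendre (n - 1) z)"
proof -
  obtain n' where n: "n = Suc n'" using assms(1) by (cases n) auto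
  have "legendre (Suc n) z = - (real n / (real n + 1)) * legendre (n - 1) z"
    using assms(2) unfolding n by (simp add: field_simps)
  then show ?thesis using assms(1) by (simp add: sgn_mult)
qed

section \<open>The zeros of a Legendre polynomial\<close>

lemma sgn_prod_lessThan: "sgn (\<Prod>i<n::nat. f i) = (\<Prod>i<n. sgn (f i :: real))"
  by (induction n) (simp_all add: sgn_mult)

lemma prod_lessThan_sign_split: "(\<Prod>i<n. if i < j then 1 else -1 :: real) = (-1) ^ (n - j)"
proof (induction n)
  case (Suc n)
  then show ?case by (cases "n < j") (auto simp: Suc_diff_le)
qed simp

lemma poly_eq_smult_prod_roots:
  fixes p :: "real poly"
  assumes "degree p = n" "inj_on x {..<n}" "\<forall>i<n. poly p (x i) = 0"
  shows "p = smult (lead_coeff p) (\<Prod>i<n. [:- x i, 1:])"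
proof (rule poly_eqI_degree_lead_coeff[where n = n and A = "x ` {..<n}"])
  have deg_prod: "degree (\<Prod>i<n. [:- x i, 1:]) = n"
    by (subst degree_prod_eq_sum_degree) auto
  moreover have "lead_coeff (\<Prod>i<n. [:- x i, 1:]) = 1"
    by (simp add: lead_coeff_prod)
  ultimately show "coeff p n = coeff (smult (lead_coeff p) (\<Prod>i<n. [:- x i, 1:])) n"
    using assms(1) by simp
  show "degree (smult (lead_coeff p) (\<Prod>i<n. [:- x i, 1:])) \<le> n"
    using deg_prod by simp
  show "n \<le> card (x ` {..<n})" using assms(2) by (simp add: card_image)
qed (use assms in \<open>auto simp: poly_prod\<close>)

lemma sgn_poly_between_roots:
  fixes p :: "real poly"
  assumes "degree p = n" "lead_coeff p > 0" "strict_mono_on {..<n} x"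
    and "\<forall>i<n. poly p (x i) = 0" and "\<forall>i<n. if i < j then x i < y else y < x i"
  shows "sgn (poly p y) = (-1) ^ (n - j)"
proof -
  have factored: "p = smult (lead_coeff p) (\<Prod>i<n. [:- x i, 1:])"
    using assms(1,3,4) by (intro poly_eq_smult_prod_roots strict_mono_on_imp_inj_on)
  have "poly p y = lead_coeff p * (\<Prod>i<n. y - x i)"
    by (subst (1) factored) (simp add: poly_prod)
  then have "sgn (poly p y) = (\<Prod>i<n. sgn (y - x i))"
    using assms(2) by (simp add: sgn_mult sgn_prod_lessThan)
  also have "\<dots> = (\<Prod>i<n. if i < j then 1 else -1)"
    using assms(5) by (intro prod.cong) auto
  finally show ?thesis by (simp add: prod_lessThan_sign_split)
qed

lemma roots_between_sign_changes:
  fixes p :: "real poly"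
  assumes "\<forall>j<n. t j < t (Suc j) \<and> poly p (t j) * poly p (t (Suc j)) < 0"
  shows "\<exists>y. \<forall>j<n. t j < y j \<and> y j < t (Suc j) \<and> poly p (y j) = 0"
proof -
  have "\<forall>j. \<exists>y. j < n \<longrightarrow> t j < y \<and> y < t (Suc j) \<and> poly p y = 0"
    using assms poly_IVT by blast
  then show ?thesis by metis
qed

text \<open>The nodes \<open>-1, x\<^sub>0, \<dots>, x\<^sub>n\<^sub>-\<^sub>1, 1\<close>, continued by \<open>1\<close> so that they are monotone on all of \<open>nat\<close>.\<close>
definition pad_nodes :: "nat \<Rightarrow> (nat \<Rightarrow> real) \<Rightarrow> nat \<Rightarrow> real" where
  "pad_nodes n x j = (if j = 0 then -1 else if j \<le> n then x (j - 1) else 1)"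

context
  fixes n :: nat and x :: "nat \<Rightarrow> real"
  assumes x_mono: "strict_mono_on {..<n} x" and x_range: "\<forall>i<n. x i \<in> {-1<..<1}"
begin

lemma pad_nodes_less_Suc: "j \<le> n \<Longrightarrow> pad_nodes n x j < pad_nodes n x (Suc j)"
proof -
  assume j: "j \<le> n"
  consider "j = 0" "n = 0" | "j = 0" "0 < n" | "0 < j" "j < n" | "0 < j" "j = n"
    using j by linarith
  then show ?thesis
  proof cases
    case 3
    then show ?thesis using x_mono[THEN monotone_onD, of "j - 1" j] by (simp add: pad_nodes_def)
  qed (use x_range in \<open>auto simp: pad_nodes_def\<close>)
qed

lemma pad_nodes_mono: "i \<le> j \<Longrightarrow> pad_nodes n x i \<le> pad_nodes n x j"
proof (rule lift_Suc_mono_le)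
  show "pad_nodes n x j \<le> pad_nodes n x (Suc j)" for j
    using pad_nodes_less_Suc[of j] by (cases "j \<le> n") (auto simp: pad_nodes_def)
qed

lemma between_pad_nodes:
  assumes y: "\<forall>j<Suc n. pad_nodes n x j < y j \<and> y j < pad_nodes n x (Suc j)"
  shows "strict_mono_on {..<Suc n} y" and "\<forall>j<Suc n. y j \<in> {-1<..<1}"
    and "\<forall>j<Suc n. \<forall>i<n. if i < j then x i < y j else y j < x i"
proof -
  let ?t = "pad_nodes n x"
  have node: "?t (Suc i) = x i" if "i < n" for i
    using that by (simp add: pad_nodes_def)
  show "strict_mono_on {..<Suc n} y"
  proof (rule monotone_onI)
    fix i j assume "i \<in> {..<Suc n}" "j \<in> {..<Suc n}" "i < j"
    then have "y i < ?t (Suc i)" "?t (Suc i) \<le> ?t j" "?t j < y j"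
      using y pad_nodes_mono[of "Suc i" j] by auto
    then show "y i < y j" by linarith
  qed
  show "\<forall>j<Suc n. y j \<in> {-1<..<1}"
  proof (intro allI impI)
    fix j assume "j < Suc n"
    then have "?t 0 \<le> ?t j" "?t j < y j" "y j < ?t (Suc j)" "?t (Suc j) \<le> ?t (Suc n)"
      using y pad_nodes_mono by auto
    then show "y j \<in> {-1<..<1}" by (simp add: pad_nodes_def)
  qed
  show "\<forall>j<Suc n. \<forall>i<n. if i < j then x i < y j else y j < x i"
  proof (intro allI impI)
    fix i j assume j: "j < Suc n" and i: "i < n"
    show "if i < j then x i < y j else y j < x i"
    proof (cases "i < j")
      case True
      then have "?t (Suc i) \<le> ?t j" "?t j < y j" using y pad_nodes_mono j by auto
      then show ?thesis using True node[OF i] by simp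
    next
      case False
      then have "y j < ?t (Suc j)" "?t (Suc j) \<le> ?t (Suc i)" using y pad_nodes_mono j by auto
      then show ?thesis using False node[OF i] by simp
    qed
  qed
qed

end

text \<open>The sign of \<open>P\<^sub>n\<^sub>-\<^sub>1\<close> at the zeros of \<open>P\<^sub>n\<close> is carried along because the recurrence gives
  \<open>P\<^sub>n\<^sub>+\<^sub>1(x\<^sub>i) = -n/(n+1) P\<^sub>n\<^sub>-\<^sub>1(x\<^sub>i)\<close>, so \<open>P\<^sub>n\<^sub>+\<^sub>1\<close> changes sign between consecutive nodes.\<close>
lemma legendre_interlacing_roots:
  assumes "1 \<le> n"
  shows "\<exists>x. strict_mono_on {..<n} x \<and> (\<forall>i<n. x i \<in> {-1<..<1} \<and> legendre n (x i) = 0)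
           \<and> (\<forall>i<n. sgn (legendre (n - 1) (x i)) = (-1) ^ (n - 1 - i))"
  using assms
proof (induction n rule: nat_induct_at_least)
  case base
  show ?case by (rule exI[of _ "\<lambda>_. 0"]) (simp add: monotone_on_def)
next
  case (Suc n)
  then obtain x where x_mono: "strict_mono_on {..<n} x"
    and x_roots: "\<forall>i<n. x i \<in> {-1<..<1} \<and> legendre n (x i) = 0"
    and x_sign: "\<forall>i<n. sgn (legendre (n - 1) (x i)) = (-1) ^ (n - 1 - i)"
    by blast
  let ?t = "pad_nodes n x"
  have t_sign: "sgn (legendre (Suc n) (?t j)) = (-1) ^ (Suc n - j)" if j: "j \<le> Suc n" for j
  proof -
    consider "j = 0" | i where "j = Suc i" "i < n" | "j = Suc n"
      using j by (cases j) (auto simp: le_less)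
    then show ?thesis
    proof cases
      case (2 i)
      have "sgn (legendre (Suc n) (x i)) = - ((-1) ^ (n - 1 - i))"
        using sgn_legendre_Suc_at_root[OF Suc.hyps, of "x i"] x_roots x_sign 2 by simp
      also have "\<dots> = (-1) ^ Suc (n - 1 - i)" by simp
      also have "Suc (n - 1 - i) = Suc n - j" using 2 by simp
      finally show ?thesis using 2 by (simp add: pad_nodes_def)
    qed (simp_all add: pad_nodes_def minus_one_power_iff)
  qed
  have "\<exists>y. \<forall>j<Suc n. ?t j < y j \<and> y j < ?t (Suc j) \<and> poly (legendre_poly (Suc n)) (y j) = 0"
  proof (rule roots_between_sign_changes, intro allI impI conjI)
    fix j assume "j < Suc n"
    then have "sgn (legendre (Suc n) (?t j) * legendre (Suc n) (?t (Suc j))) = -1"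
      using t_sign[of j] t_sign[of "Suc j"] by (simp add: sgn_mult Suc_diff_le flip: power_add)
    then show "poly (legendre_poly (Suc n)) (?t j) * poly (legendre_poly (Suc n)) (?t (Suc j)) < 0"
      using sgn_less[of "legendre (Suc n) (?t j) * legendre (Suc n) (?t (Suc j))"] by simp
  qed (use pad_nodes_less_Suc x_mono x_roots in auto)
  then obtain y where y: "\<forall>j<Suc n. ?t j < y j \<and> y j < ?t (Suc j) \<and> legendre (Suc n) (y j) = 0"
    by auto
  note interlace = between_pad_nodes[OF x_mono, of y]
  have "sgn (legendre n (y j)) = (-1) ^ (n - j)" if "j < Suc n" for j
    using sgn_poly_between_roots[OF degree_legendre_poly lead_coeff_legendre_poly_pos x_mono]
      interlace(3) x_roots y that by auto
  then show ?case using interlace(1,2) x_roots y by auto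
qed

lemma legendre_poly_dvd_if_vanishes_at_roots:
  assumes "\<forall>z. -1 \<le> z \<and> z \<le> 1 \<and> legendre n z = 0 \<longrightarrow> poly F z = 0"
  shows "legendre_poly n dvd F"
proof (cases "n = 0")
  case False
  then obtain x where x_mono: "strict_mono_on {..<n} x"
    and x_roots: "\<forall>i<n. x i \<in> {-1<..<1} \<and> legendre n (x i) = 0"
    using legendre_interlacing_roots[of n] by auto
  let ?L = "legendre_poly n"
  have card_roots: "card (x ` {..<n}) = n"
    using x_mono by (simp add: card_image strict_mono_on_imp_inj_on)
  have "F mod ?L = 0"
  proof (rule poly_eqI_degree[of "x ` {..<n}"])
    fix z assume "z \<in> x ` {..<n}"
    then have "legendre n z = 0" "poly F z = 0" using x_roots assms by auto
    then show "poly (F mod ?L) z = poly 0 z"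
      using div_mult_mod_eq[of F ?L] by (metis add_0 mult_zero_right poly_add poly_legendre_poly poly_mult poly_0)
  next
    have "?L \<noteq> 0" using False by (metis degree_0 degree_legendre_poly)
    then show "degree (F mod ?L) < card (x ` {..<n})"
      using degree_mod_less[of ?L F] False card_roots by auto
  qed (use False card_roots in simp)
  then show ?thesis by (simp add: mod_eq_0_iff_dvd)
qed simp

lemma degree_le_1_imp_linear:
  fixes r :: "real poly"
  assumes "degree r \<le> 1"
  shows "r = [:coeff r 0, coeff r 1:]"
proof (rule poly_eqI)
  fix n show "coeff r n = coeff [:coeff r 0, coeff r 1:] n"
  proof (cases n)
    case (Suc n') then show ?thesis using assms by (cases n') (auto simp: coeff_eq_0)
  qed simp
qed

lemma legendre_multiple_at_endpoints:
  fixes F :: "real poly"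
  assumes m: "odd m" and deg: "degree F \<le> Suc m" and dvd: "legendre_poly m dvd F"
  shows "poly F 1 = (coeff F (Suc m) + coeff F m) / lead_coeff (legendre_poly m)"
    and "poly F (-1) = (coeff F (Suc m) - coeff F m) / lead_coeff (legendre_poly m)"
    and "coeff F (Suc m) = 0 \<Longrightarrow> coeff F m = 0 \<Longrightarrow> F = 0"
proof -
  let ?L = "legendre_poly m"
  have kpos: "lead_coeff ?L > 0" by (rule lead_coeff_legendre_poly_pos)
  then have L0: "?L \<noteq> 0" by auto
  obtain r where r: "F = ?L * r" using dvd by (auto elim: dvdE)
  have "degree r \<le> 1"
  proof (cases "r = 0")
    case False
    then have "degree F = m + degree r" using r L0 by (simp add: degree_mult_eq)
    then show ?thesis using deg by simp
  qed simp
  then have "r = [:coeff r 0, coeff r 1:]" by (rule degree_le_1_imp_linear)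
  then have F: "F = smult (coeff r 0) ?L + pCons 0 (smult (coeff r 1) ?L)"
    using r by (metis mult_pCons_right mult_zero_right smult_0_right add_0_right pCons_0_0)
  obtain m' where m': "m = Suc m'" using m by (cases m) auto
  have "coeff ?L (Suc m) = 0" by (rule coeff_legendre_poly_above) simp
  then have top: "coeff F (Suc m) = coeff r 1 * lead_coeff ?L" unfolding F by simp
  have "coeff ?L m' = 0" by (rule coeff_legendre_poly_parity) (use m m' in simp)
  then have next_top: "coeff F m = coeff r 0 * lead_coeff ?L" unfolding F using m' by simp
  have "poly ?L (-1) = -1" using m by simp
  then show "poly F (-1) = (coeff F (Suc m) - coeff F m) / lead_coeff ?L"
    unfolding top next_top using kpos by (simp add: F field_simps)
  show "poly F 1 = (coeff F (Suc m) + coeff F m) / lead_coeff ?L"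
    unfolding top next_top using kpos by (simp add: F field_simps)
  show "coeff F (Suc m) = 0 \<Longrightarrow> coeff F m = 0 \<Longrightarrow> F = 0"
    unfolding top next_top using kpos by (simp add: F)
qed

section \<open>Polynomials in two variables\<close>

text \<open>A polynomial of total degree at most \<open>N\<close> is represented as \<open>bipoly M c\<close> for any \<open>M \<ge> N\<close>,
  with \<open>c i j = 0\<close> whenever \<open>i + j > N\<close>.\<close>

definition bipoly :: "nat \<Rightarrow> (nat \<Rightarrow> nat \<Rightarrow> real) \<Rightarrow> real \<Rightarrow> real \<Rightarrow> real" where
  "bipoly M c x y = (\<Sum>i\<le>M. \<Sum>j\<le>M. c i j * x ^ i * y ^ j)"

lemma bipoly_swap: "bipoly M (\<lambda>i j. c j i) x y = bipoly M c y x"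
  unfolding bipoly_def by (subst sum.swap) (simp add: mult_ac)

lemma bipoly_as_poly_in_y: "bipoly M c x y = (\<Sum>j\<le>M. (\<Sum>i\<le>M. c i j * x ^ i) * y ^ j)"
  unfolding bipoly_def by (subst sum.swap) (simp add: sum_distrib_right)

lemma bipoly_as_poly_in_x: "bipoly M c x y = (\<Sum>i\<le>M. (\<Sum>j\<le>M. c i j * y ^ j) * x ^ i)"
  unfolding bipoly_def by (simp add: sum_distrib_right sum_distrib_left mult_ac)

lemma triangular_sum_eq_bipoly:
  assumes "N \<le> M"
  shows "(\<Sum>i\<le>N. \<Sum>j\<le>N - i. c i j * x ^ i * y ^ j)
           = bipoly M (\<lambda>i j. if i + j \<le> N then c i j else 0) x y"
proof -
  have row: "(\<Sum>j\<le>M. (if i + j \<le> N then c i j else 0) * x ^ i * y ^ j) =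
      (if i \<le> N then (\<Sum>j\<le>N - i. c i j * x ^ i * y ^ j) else 0)" for i
  proof -
    have "(\<Sum>j\<le>M. (if i + j \<le> N then c i j else 0) * x ^ i * y ^ j) =
        (\<Sum>j\<in>{j\<in>{..M}. i + j \<le> N}. c i j * x ^ i * y ^ j)"
      by (subst sum.inter_filter) (auto intro!: sum.cong)
    also have "{j\<in>{..M}. i + j \<le> N} = (if i \<le> N then {..N - i} else {})"
      using assms by auto
    finally show ?thesis by simp
  qed
  have "bipoly M (\<lambda>i j. if i + j \<le> N then c i j else 0) x y =
      (\<Sum>i\<in>{i\<in>{..M}. i \<le> N}. \<Sum>j\<le>N - i. c i j * x ^ i * y ^ j)"
    unfolding bipoly_def row by (subst sum.inter_filter) auto
  also have "{i\<in>{..M}. i \<le> N} = {..N}" using assms by auto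
  finally show ?thesis by simp
qed

lemma polyP_bipoly:
  assumes "\<forall>i j. d i j \<noteq> 0 \<longrightarrow> i + j \<le> N" and "N \<le> M"
  shows "polyP N (\<lambda>z. bipoly M d (fst z) (snd z))"
proof -
  have "(\<lambda>i j. if i + j \<le> N then d i j else 0) = d" using assms(1) by fastforce
  then have "bipoly M d x y = (\<Sum>i\<le>N. \<Sum>j\<le>N - i. d i j * x ^ i * y ^ j)" for x y
    using triangular_sum_eq_bipoly[OF assms(2), of d x y] by simp
  then show ?thesis unfolding polyP_def by auto
qed

lemma poly_as_sum_atMost:
  fixes p :: "real poly"
  assumes "degree p \<le> N"
  shows "poly p x = (\<Sum>i\<le>N. coeff p i * x ^ i)"
proof -
  have "poly p x = (\<Sum>i\<le>degree p. coeff p i * x ^ i)" by (simp add: poly_altdef)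
  also have "\<dots> = (\<Sum>i\<le>N. coeff p i * x ^ i)"
    by (rule sum.mono_neutral_left) (use assms in \<open>auto simp: coeff_eq_0\<close>)
  finally show ?thesis .
qed

lemma polyfun_factor_one_minus_sq:
  fixes c :: "nat \<Rightarrow> real"
  assumes supp: "\<forall>i. c i \<noteq> 0 \<longrightarrow> i \<le> n" and "n \<le> N"
    and at_one: "(\<Sum>i\<le>N. c i) = 0" and at_minus_one: "(\<Sum>i\<le>N. c i * (-1) ^ i) = 0"
  obtains b where "\<forall>i. b i \<noteq> 0 \<longrightarrow> i + 2 \<le> n"
    and "\<And>x. (\<Sum>i\<le>N. c i * x ^ i) = (1 - x\<^sup>2) * (\<Sum>i\<le>N. b i * x ^ i)"
proof -
  define P where "P = (\<Sum>i\<le>N. monom (c i) i)"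
  have poly_P: "poly P x = (\<Sum>i\<le>N. c i * x ^ i)" for x
    unfolding P_def by (simp add: poly_sum poly_monom)
  have "degree P \<le> n"
    using supp by (intro degree_le) (auto simp: P_def coeff_sum coeff_monom)
  have "[:-1, 1:] dvd P" using at_one by (simp add: poly_P flip: poly_eq_0_iff_dvd)
  then obtain Q where Q: "P = [:-1, 1:] * Q" by (auto elim: dvdE)
  have "poly Q (-1) = 0" using at_minus_one Q poly_P[of "-1"] by (simp add: mult.commute)
  then obtain R where "Q = [:1, 1:] * R" by (auto simp: poly_eq_0_iff_dvd elim: dvdE)
  then have PR: "P = [:-1, 0, 1:] * R" using Q by (simp add: mult.assoc[symmetric] mult_pCons_left)
  have deg_R: "degree R + 2 \<le> n" if "R \<noteq> 0"
    using \<open>degree P \<le> n\<close> that unfolding PR by (subst (asm) degree_mult_eq) auto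
  show ?thesis
  proof (rule that[of "\<lambda>i. - coeff R i"])
    show "\<forall>i. - coeff R i \<noteq> 0 \<longrightarrow> i + 2 \<le> n"
      using deg_R le_degree by fastforce
    fix x
    have "degree R \<le> N" using deg_R \<open>n \<le> N\<close> by (cases "R = 0") auto
    have "(\<Sum>i\<le>N. c i * x ^ i) = (x\<^sup>2 - 1) * poly R x"
      by (simp add: poly_P[symmetric] PR power2_eq_square algebra_simps)
    also have "\<dots> = (1 - x\<^sup>2) * (\<Sum>i\<le>N. - coeff R i * x ^ i)"
      using poly_as_sum_atMost[OF \<open>degree R \<le> N\<close>, of x] by (simp add: sum_negf algebra_simps)
    finally show "(\<Sum>i\<le>N. c i * x ^ i) = (1 - x\<^sup>2) * (\<Sum>i\<le>N. - coeff R i * x ^ i)" .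
  qed
qed

lemma bipoly_factor_one_minus_x_sq:
  assumes supp: "\<forall>i j. c i j \<noteq> 0 \<longrightarrow> i + j + s \<le> M"
    and at_one: "\<forall>y. bipoly M c 1 y = 0" and at_minus_one: "\<forall>y. bipoly M c (-1) y = 0"
  obtains e where "\<forall>i j. e i j \<noteq> 0 \<longrightarrow> i + j + s + 2 \<le> M"
    and "\<And>x y. bipoly M c x y = (1 - x\<^sup>2) * bipoly M e x y"
proof -
  have column_zero: "(\<Sum>i\<le>M. c i j * z ^ i) = 0" if z: "z = 1 \<or> z = -1" for z j
  proof (cases "j \<le> M")
    case True
    have "\<forall>y. (\<Sum>j\<le>M. (\<Sum>i\<le>M. c i j * z ^ i) * y ^ j) = 0"
      using at_one at_minus_one z by (auto simp: bipoly_as_poly_in_y)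
    then show ?thesis using True by (simp add: polyfun_eq_0)
  next
    case False
    then have "c i j = 0" for i using supp by fastforce
    then show ?thesis by simp
  qed
  have "\<exists>b. (\<forall>i. b i \<noteq> 0 \<longrightarrow> i + 2 \<le> M - j - s) \<and>
             (\<forall>x. (\<Sum>i\<le>M. c i j * x ^ i) = (1 - x\<^sup>2) * (\<Sum>i\<le>M. b i * x ^ i))" for j
  proof -
    have "\<forall>i. c i j \<noteq> 0 \<longrightarrow> i \<le> M - j - s" using supp by fastforce
    then show ?thesis
      using column_zero[of 1 j] column_zero[of "-1" j]
      by (elim polyfun_factor_one_minus_sq) auto
  qed
  then obtain B where B: "\<forall>j. (\<forall>i. B j i \<noteq> 0 \<longrightarrow> i + 2 \<le> M - j - s) \<and>
             (\<forall>x. (\<Sum>i\<le>M. c i j * x ^ i) = (1 - x\<^sup>2) * (\<Sum>i\<le>M. B j i * x ^ i))"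
    by metis
  show ?thesis
  proof (rule that[of "\<lambda>i j. B j i"])
    show "\<forall>i j. B j i \<noteq> 0 \<longrightarrow> i + j + s + 2 \<le> M" using B by fastforce
    fix x y
    have "bipoly M c x y = (\<Sum>j\<le>M. ((1 - x\<^sup>2) * (\<Sum>i\<le>M. B j i * x ^ i)) * y ^ j)"
      using B by (simp add: bipoly_as_poly_in_y)
    also have "\<dots> = (1 - x\<^sup>2) * bipoly M (\<lambda>i j. B j i) x y"
      by (simp add: bipoly_as_poly_in_y sum_distrib_left sum_distrib_right mult_ac)
    finally show "bipoly M c x y = (1 - x\<^sup>2) * bipoly M (\<lambda>i j. B j i) x y" .
  qed
qed

lemma polyfun_eq_0_off_finite:
  fixes f :: "nat \<Rightarrow> real"
  assumes "finite S" and "\<And>x. x \<notin> S \<Longrightarrow> (\<Sum>i\<le>M. f i * x ^ i) = 0"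
  shows "\<forall>i\<le>M. f i = 0"
proof (rule ccontr)
  assume "\<not> (\<forall>i\<le>M. f i = 0)"
  then have "finite {x. (\<Sum>i\<le>M. f i * x ^ i) = 0}"
    using polyfun_finite_roots[of f M] by blast
  moreover have "- S \<subseteq> {x. (\<Sum>i\<le>M. f i * x ^ i) = 0}" using assms(2) by blast
  ultimately have "finite (- S)" by (rule finite_subset[rotated])
  with \<open>finite S\<close> show False by (metis finite_Un Compl_partition infinite_UNIV_char_0)
qed

lemma bipoly_factor_boundary:
  assumes supp: "\<forall>i j. c i j \<noteq> 0 \<longrightarrow> i + j \<le> M"
    and x_edges: "\<forall>y. bipoly M c 1 y = 0 \<and> bipoly M c (-1) y = 0"
    and y_edges: "\<forall>x. bipoly M c x 1 = 0 \<and> bipoly M c x (-1) = 0"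
  obtains d where "\<forall>i j. d i j \<noteq> 0 \<longrightarrow> i + j + 4 \<le> M"
    and "\<And>x y. bipoly M c x y = (1 - x\<^sup>2) * (1 - y\<^sup>2) * bipoly M d x y"
proof -
  obtain e where e_supp: "\<forall>i j. e i j \<noteq> 0 \<longrightarrow> i + j + 0 + 2 \<le> M"
    and c_eq: "\<And>x y. bipoly M c x y = (1 - x\<^sup>2) * bipoly M e x y"
    using bipoly_factor_one_minus_x_sq[of c 0 M] supp x_edges by auto
  have e_y_edge: "bipoly M e x z = 0" if z: "\<forall>x. bipoly M c x z = 0" for x z
  proof -
    have "\<forall>i\<le>M. (\<Sum>j\<le>M. e i j * z ^ j) = 0"
    proof (rule polyfun_eq_0_off_finite[of "{1, -1}"])
      fix x :: real assume "x \<notin> {1, -1}"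
      then have "1 - x\<^sup>2 \<noteq> 0" by (auto simp: power2_eq_1_iff)
      then show "(\<Sum>i\<le>M. (\<Sum>j\<le>M. e i j * z ^ j) * x ^ i) = 0"
        using z c_eq[of x z] by (simp add: bipoly_as_poly_in_x)
    qed simp
    then show ?thesis by (simp add: bipoly_as_poly_in_x)
  qed
  have eT_supp: "\<forall>i j. e j i \<noteq> 0 \<longrightarrow> i + j + 2 \<le> M" using e_supp by fastforce
  have eT_edges: "\<forall>y. bipoly M (\<lambda>i j. e j i) 1 y = 0" "\<forall>y. bipoly M (\<lambda>i j. e j i) (-1) y = 0"
    using e_y_edge y_edges by (simp_all add: bipoly_swap[of M e])
  obtain d where d_supp: "\<forall>i j. d i j \<noteq> 0 \<longrightarrow> i + j + 2 + 2 \<le> M"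
    and e_eq: "\<And>x y. bipoly M (\<lambda>i j. e j i) x y = (1 - x\<^sup>2) * bipoly M d x y"
    using bipoly_factor_one_minus_x_sq[OF eT_supp eT_edges] by blast
  show ?thesis
  proof (rule that[of "\<lambda>i j. d j i"])
    show "\<forall>i j. d j i \<noteq> 0 \<longrightarrow> i + j + 4 \<le> M" using d_supp by fastforce
    fix x y
    have "bipoly M e x y = (1 - y\<^sup>2) * bipoly M (\<lambda>i j. d j i) x y"
      using e_eq[of y x] by (simp add: bipoly_swap[of M e] bipoly_swap[of M d])
    then show "bipoly M c x y = (1 - x\<^sup>2) * (1 - y\<^sup>2) * bipoly M (\<lambda>i j. d j i) x y"
      using c_eq[of x y] by simp
  qed
qed

section \<open>The space \<open>ER\<^sub>m\<close>\<close>

definition er_fun :: "nat \<Rightarrow> (nat \<Rightarrow> nat \<Rightarrow> real) \<Rightarrow> real \<Rightarrow> real \<Rightarrow> real \<Rightarrow> real \<Rightarrow> real" where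
  "er_fun m c a b x y = bipoly m c x y + a * (x ^ m * y - x * y ^ m) + b * (x ^ Suc m - y ^ Suc m)"

lemma er_fun_swap: "er_fun m c a b x y = er_fun m (\<lambda>i j. c j i) (-a) (-b) y x"
  by (simp add: er_fun_def bipoly_swap[of m c y x] algebra_simps)

text \<open>For \<open>m = 1\<close> the term \<open>x\<^sup>m y - x y\<^sup>m\<close> vanishes identically, so \<open>a\<close> is normalised to \<open>0\<close>.\<close>

lemma ER_imp_er_fun:
  assumes "ER m v"
  obtains c a b where "\<forall>i j. c i j \<noteq> 0 \<longrightarrow> i + j \<le> m" and "m = 1 \<longrightarrow> a = 0"
    and "\<And>x y. v (x, y) = er_fun m c a b x y"
proof -
  obtain p a b c where v_eq: "\<forall>x y. v (x, y) = p (x, y) + a * (x ^ m * y - x * y ^ m)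
                                           + b * (x ^ (m + 1) - y ^ (m + 1))"
    and p_eq: "\<forall>x y. p (x, y) = (\<Sum>i\<le>m. \<Sum>j\<le>m - i. c i j * x ^ i * y ^ j)"
    using assms unfolding ER_def polyP_def by blast
  let ?c = "\<lambda>i j. if i + j \<le> m then c i j else 0"
  show ?thesis
  proof (rule that[of ?c "if m = 1 then 0 else a" b])
    fix x y
    show "v (x, y) = er_fun m ?c (if m = 1 then 0 else a) b x y"
      using v_eq p_eq triangular_sum_eq_bipoly[of m m c x y] by (simp add: er_fun_def)
  qed auto
qed

lemma er_fun_restriction_poly:
  assumes m: "odd m" and supp: "\<forall>i j. c i j \<noteq> 0 \<longrightarrow> i + j \<le> m" and a1: "m = 1 \<longrightarrow> a = 0"
  obtains F where "\<And>y. poly F y = er_fun m c a b s y" and "degree F \<le> Suc m"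
    and "coeff F m = c 0 m - a * s" and "coeff F (Suc m) = - b"
proof -
  define F where "F = (\<Sum>j\<le>m. monom (\<Sum>i\<le>m. c i j * s ^ i) j)
      + smult a (monom (s ^ m) 1 - monom s m) + smult b (monom (s ^ Suc m) 0 - monom 1 (Suc m))"
  have coeff_F: "coeff F n = (if n \<le> m then (\<Sum>i\<le>m. c i n * s ^ i) else 0)
      + a * ((if n = 1 then s ^ m else 0) - (if n = m then s else 0))
      + b * ((if n = 0 then s ^ Suc m else 0) - (if n = Suc m then 1 else 0))" for n
    unfolding F_def by (simp add: coeff_sum coeff_monom)
  have m0: "m \<noteq> 0" using m by (auto simp: odd_pos)
  have "(\<Sum>i\<le>m. c i m * s ^ i) = (\<Sum>i\<le>m. if i = 0 then c 0 m else 0)"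
    using supp by (intro sum.cong) (auto, metis add_le_same_cancel2 not_le)
  then have "(\<Sum>i\<le>m. c i m * s ^ i) = c 0 m" by simp
  then have "coeff F m = c 0 m - a * s"
    using a1 m0 by (cases "m = 1") (auto simp: coeff_F)
  moreover have "coeff F (Suc m) = - b" using m0 by (simp add: coeff_F)
  moreover have "degree F \<le> Suc m" by (rule degree_le) (simp add: coeff_F)
  moreover have "poly F y = er_fun m c a b s y" for y
    unfolding F_def er_fun_def by (simp add: poly_sum poly_monom bipoly_as_poly_in_y algebra_simps)
  ultimately show ?thesis using that by blast
qed

lemma er_fun_on_vanishing_edge:
  assumes m: "odd m" and supp: "\<forall>i j. c i j \<noteq> 0 \<longrightarrow> i + j \<le> m" and a1: "m = 1 \<longrightarrow> a = 0"
    and nodes: "\<forall>g. -1 \<le> g \<and> g \<le> 1 \<and> legendre m g = 0 \<longrightarrow> er_fun m c a b s g = 0"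
  shows "t \<in> {1, -1} \<Longrightarrow> lead_coeff (legendre_poly m) * er_fun m c a b s t = t * (c 0 m - a * s) - b"
    and "b = 0 \<Longrightarrow> c 0 m = a * s \<Longrightarrow> er_fun m c a b s y = 0"
proof -
  obtain F where poly_F: "\<And>y. poly F y = er_fun m c a b s y" and deg: "degree F \<le> Suc m"
    and top: "coeff F m = c 0 m - a * s" "coeff F (Suc m) = - b"
    using er_fun_restriction_poly[OF m supp a1] by blast
  have dvd: "legendre_poly m dvd F"
    using nodes by (intro legendre_poly_dvd_if_vanishes_at_roots) (simp add: poly_F)
  have "lead_coeff (legendre_poly m) > 0" by (rule lead_coeff_legendre_poly_pos)
  then show "t \<in> {1, -1} \<Longrightarrow> lead_coeff (legendre_poly m) * er_fun m c a b s t = t * (c 0 m - a * s) - b"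
    using legendre_multiple_at_endpoints(1,2)[OF m deg dvd] by (auto simp: poly_F top field_simps)
  show "b = 0 \<Longrightarrow> c 0 m = a * s \<Longrightarrow> er_fun m c a b s y = 0"
    using legendre_multiple_at_endpoints(3)[OF m deg dvd] poly_F[of y] by (simp add: top)
qed

lemma er_fun_vanishing_on_nodes:
  assumes m: "odd m" and supp: "\<forall>i j. c i j \<noteq> 0 \<longrightarrow> i + j \<le> m" and a1: "m = 1 \<longrightarrow> a = 0"
    and nodes: "\<forall>s\<in>{1, -1}. \<forall>g. -1 \<le> g \<and> g \<le> 1 \<and> legendre m g = 0 \<longrightarrow>
                   er_fun m c a b s g = 0 \<and> er_fun m c a b g s = 0"
  shows "a = 0" and "b = 0"
    and "\<forall>y. bipoly m c 1 y = 0 \<and> bipoly m c (-1) y = 0"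
    and "\<forall>x. bipoly m c x 1 = 0 \<and> bipoly m c x (-1) = 0"
proof -
  let ?cT = "\<lambda>i j. c j i"
  have suppT: "\<forall>i j. ?cT i j \<noteq> 0 \<longrightarrow> i + j \<le> m" using supp by (metis add.commute)
  have a1T: "m = 1 \<longrightarrow> - a = 0" using a1 by simp
  have x_edge: "\<forall>g. -1 \<le> g \<and> g \<le> 1 \<and> legendre m g = 0 \<longrightarrow> er_fun m c a b s g = 0"
    and y_edge: "\<forall>g. -1 \<le> g \<and> g \<le> 1 \<and> legendre m g = 0 \<longrightarrow> er_fun m ?cT (-a) (-b) s g = 0"
    if "s \<in> {1, -1}" for s
    using nodes that er_fun_swap[of m c a b _ s] by auto
  note on_x_edge = er_fun_on_vanishing_edge[OF m supp a1 x_edge]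
  note on_y_edge = er_fun_on_vanishing_edge[OF m suppT a1T y_edge]
  let ?K = "lead_coeff (legendre_poly m)"
  have corner: "t * (c 0 m - a * s) - b = s * (c m 0 + a * t) + b"
    if "s \<in> {1, -1}" "t \<in> {1, -1}" for s t
  proof -
    have "t * (c 0 m - a * s) - b = ?K * er_fun m c a b s t" using on_x_edge(1) that by simp
    also have "\<dots> = ?K * er_fun m ?cT (-a) (-b) t s" using er_fun_swap[of m c a b s t] by simp
    also have "\<dots> = s * (c m 0 + a * t) + b" using on_y_edge(1) that by simp
    finally show ?thesis .
  qed
  have "c 0 m - a - b = c m 0 + a + b" "- c 0 m + a - b = c m 0 - a + b"
    "c 0 m + a - b = - c m 0 - a + b" "- c 0 m - a - b = - c m 0 + a + b"
    using corner[of 1 1] corner[of 1 "-1"] corner[of "-1" 1] corner[of "-1" "-1"] by simp_all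
  then have a0: "a = 0" and b0: "b = 0" and top: "c 0 m = 0" "c m 0 = 0" by linarith+
  show "a = 0" "b = 0" by (fact a0, fact b0)
  show "\<forall>y. bipoly m c 1 y = 0 \<and> bipoly m c (-1) y = 0"
    using on_x_edge(2) a0 b0 top by (simp add: er_fun_def)
  show "\<forall>x. bipoly m c x 1 = 0 \<and> bipoly m c x (-1) = 0"
    using on_y_edge(2) a0 b0 top by (simp add: er_fun_def bipoly_swap[of m c])
qed

lemma ER_factor_if_vanishes_on_Gset:
  assumes hv: "ER (2 * k + 1) v" and vanish: "\<forall>z\<in>Gset k. v z = 0"
  obtains d where "\<forall>i j. d i j \<noteq> 0 \<longrightarrow> i + j + 4 \<le> 2 * k + 1"
    and "\<And>x y. v (x, y) = (1 - x\<^sup>2) * (1 - y\<^sup>2) * bipoly (2 * k + 1) d x y"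
proof -
  define m where "m = 2 * k + 1"
  have "odd m" by (simp add: m_def)
  obtain c a b where c_supp: "\<forall>i j. c i j \<noteq> 0 \<longrightarrow> i + j \<le> m" and a1: "m = 1 \<longrightarrow> a = 0"
    and v_eq: "\<And>x y. v (x, y) = er_fun m c a b x y"
    using ER_imp_er_fun hv unfolding m_def by blast
  have "(s, g) \<in> Gset k \<and> (g, s) \<in> Gset k"
    if "s \<in> {1, -1}" "-1 \<le> g \<and> g \<le> 1 \<and> legendre m g = 0" for s g
    using that unfolding Gset_def m_def by auto
  then have nodes: "\<forall>s\<in>{1, -1}. \<forall>g. -1 \<le> g \<and> g \<le> 1 \<and> legendre m g = 0 \<longrightarrow>
                   er_fun m c a b s g = 0 \<and> er_fun m c a b g s = 0"
    using vanish by (simp flip: v_eq)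
  note boundary = er_fun_vanishing_on_nodes[OF \<open>odd m\<close> c_supp a1 nodes]
  obtain d where "\<forall>i j. d i j \<noteq> 0 \<longrightarrow> i + j + 4 \<le> m"
    and "\<And>x y. bipoly m c x y = (1 - x\<^sup>2) * (1 - y\<^sup>2) * bipoly m d x y"
    using bipoly_factor_boundary[OF c_supp boundary(3,4)] by blast
  then show ?thesis
    using that v_eq boundary(1,2) unfolding m_def by (simp add: er_fun_def)
qed

theorem theorem3p1:
  fixes k :: nat and I :: "(real \<times> real) set" and v :: "real \<times> real \<Rightarrow> real"
  assumes I_fin: "finite I"
    and I_int: "I \<subseteq> {-1<..<1} \<times> {-1<..<1}"
    and I_card: "card I = (2 * k - 1) * (k - 1)"
    and I_empty: "k \<le> 1 \<Longrightarrow> I = {}"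
    and I_unisolvent: "k \<ge> 2 \<Longrightarrow>
          \<forall>p. polyP (2 * k - 3) p \<and> (\<forall>z\<in>I. p z = 0) \<longrightarrow> (\<forall>z. p z = 0)"
    and hv: "ER (2 * k + 1) v"
    and vanish: "\<forall>z \<in> Gset k \<union> I. v z = 0"
  shows "\<forall>z. v z = 0"
proof -
  obtain d where d_supp: "\<forall>i j. d i j \<noteq> 0 \<longrightarrow> i + j + 4 \<le> 2 * k + 1"
    and v_factor: "\<And>x y. v (x, y) = (1 - x\<^sup>2) * (1 - y\<^sup>2) * bipoly (2 * k + 1) d x y"
    using ER_factor_if_vanishes_on_Gset[OF hv] vanish by blast
  let ?q = "\<lambda>z. bipoly (2 * k + 1) d (fst z) (snd z)"
  have "?q z = 0" for z
  proof (cases "k \<le> 1")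
    case True
    then show ?thesis using d_supp by (simp add: bipoly_def)
  next
    case False
    have "polyP (2 * k - 3) ?q" using d_supp by (intro polyP_bipoly) fastforce+
    moreover have "?q (x, y) = 0" if "(x, y) \<in> I" for x y
    proof -
      have "1 - x\<^sup>2 \<noteq> 0" "1 - y\<^sup>2 \<noteq> 0" using that I_int by (auto simp: power2_eq_1_iff)
      then show ?thesis using that vanish v_factor[of x y] by simp
    qed
    ultimately show ?thesis using I_unisolvent False by auto
  qed
  then show ?thesis using v_factor by (metis mult_zero_right prod.collapse)
qed

end
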